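(* Let $\mathcal{G}=(\mathcal{V},\mathcal{E})$ be a graph, let $\epsilon>0$, $\Lambda>0$, $k>0$ and $\gamma\in(0,1)$, and let $\mathcal{Z}$ be a $k$-covering of $\mathcal{G}$ of size $Z$. Then there is an algorithm $\mathcal{A}$ that is $\epsilon$-differentially private on $\mathcal{G}$ such that for any $w:\mathcal{E}\to[0,\Lambda]$, with probability at least $1-\gamma$, $\mathcal{A}(w)$ releases all-pairs distances with approximation error $O\big(k\Lambda+Z^2\epsilon^{-1}\log(Z/\gamma)\big)$ per distance.
   Context: Private edge weight model: for a graph $\mathcal{G}=(\mathcal{V},\mathcal{E})$, a weight function is $w:\mathcal{E}\to\mathbb{R}^+$ (nonnegative reals). Two weight functions $w,w'$ are neighboring if $\sum_{e\in\mathcal{E}}|w(e)-w'(e)|\le 1$. A randomized algorithm $\mathcal{A}$ taking weight functions on $\mathcal{E}$ as input is $\epsilon$-differentially private on $\mathcal{G}$ if for all neighboring $w,w'$ and all sets $S$ of outputs, $\Pr[\mathcal{A}(w)\in S]\le e^{\epsilon}\Pr[\mathcal{A}(w')\in S]$. The weight of a path is the sum of the weights of its edges, and $d_w(x,y)$ is the minimum weight of a path from $x$ to $y$; the approximation error of a released distance for $(x,y)$ is the absolute difference between the released value and $d_w(x,y)$. A subset $\mathcal{Z}\subseteq\mathcal{V}$ is a $k$-covering if for every $v\in\mathcal{V}$ there is $z\in\mathcal{Z}$ joined to $v$ by a path with at most $k$ edges. The $O(\cdot)$ hides absolute constants. *)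

theory Defs
  imports "HOL-Probability.Probability"
begin

text \<open>Graphs: vertices are natural numbers (so that the absolute constant hidden in
  the O-notation can be quantified uniformly over all finite graphs).\<close>

definition graph :: "nat set \<Rightarrow> nat set set \<Rightarrow> bool" where
  "graph V E \<longleftrightarrow> finite V \<and> (\<forall>e\<in>E. e \<subseteq> V \<and> card e = 2)"

definition is_path :: "nat set set \<Rightarrow> nat list \<Rightarrow> bool" where
  "is_path E xs \<longleftrightarrow> xs \<noteq> [] \<and> (\<forall>i < length xs - 1. {xs ! i, xs ! Suc i} \<in> E)"

definition path_weight :: "(nat set \<Rightarrow> real) \<Rightarrow> nat list \<Rightarrow> real" where
  "path_weight w xs = (\<Sum>i < length xs - 1. w {xs ! i, xs ! Suc i})"

definition paths_between :: "nat set set \<Rightarrow> nat \<Rightarrow> nat \<Rightarrow> nat list set" where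
  "paths_between E x y = {xs. is_path E xs \<and> hd xs = x \<and> last xs = y}"

definition connected_pair :: "nat set set \<Rightarrow> nat \<Rightarrow> nat \<Rightarrow> bool" where
  "connected_pair E x y \<longleftrightarrow> paths_between E x y \<noteq> {}"

definition dist_w :: "nat set set \<Rightarrow> (nat set \<Rightarrow> real) \<Rightarrow> nat \<Rightarrow> nat \<Rightarrow> real" where
  "dist_w E w x y = Inf (path_weight w ` paths_between E x y)"

definition k_covering :: "nat set \<Rightarrow> nat set set \<Rightarrow> nat \<Rightarrow> nat set \<Rightarrow> bool" where
  "k_covering V E k Zs \<longleftrightarrow> Zs \<subseteq> V \<and>
     (\<forall>v\<in>V. \<exists>z\<in>Zs. \<exists>xs\<in>paths_between E v z. length xs - 1 \<le> k)"

definition weight_fun :: "nat set set \<Rightarrow> (nat set \<Rightarrow> real) \<Rightarrow> bool" where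
  "weight_fun E w \<longleftrightarrow> (\<forall>e\<in>E. 0 \<le> w e)"

definition neighboring :: "nat set set \<Rightarrow> (nat set \<Rightarrow> real) \<Rightarrow> (nat set \<Rightarrow> real) \<Rightarrow> bool" where
  "neighboring E w w' \<longleftrightarrow> (\<Sum>e\<in>E. \<bar>w e - w' e\<bar>) \<le> 1"

definition out_space :: "nat set \<Rightarrow> (nat \<times> nat \<Rightarrow> real) measure" where
  "out_space V = PiM (V \<times> V) (\<lambda>_. lborel)"

definition randomized_alg :: "nat set \<Rightarrow> ((nat set \<Rightarrow> real) \<Rightarrow> (nat \<times> nat \<Rightarrow> real) measure) \<Rightarrow> bool" where
  "randomized_alg V A \<longleftrightarrow> (\<forall>w. prob_space (A w) \<and> sets (A w) = sets (out_space V))"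

definition diff_private :: "nat set set \<Rightarrow> real \<Rightarrow> ((nat set \<Rightarrow> real) \<Rightarrow> 'b measure) \<Rightarrow> bool" where
  "diff_private E \<epsilon> A \<longleftrightarrow>
     (\<forall>w w'. weight_fun E w \<and> weight_fun E w' \<and> neighboring E w w' \<longrightarrow>
        (\<forall>S \<in> sets (A w). measure (A w) S \<le> exp \<epsilon> * measure (A w') S))"

end

theory Submission
  imports Defs
begin

text \<open>Release, for every ordered pair of distinct covering vertices, their distance perturbed by
  discrete Laplace noise of scale about \<open>card Zs ^ 2 / \<epsilon>\<close>, and answer a query \<open>(x, y)\<close> with
  the noisy distance between the covering vertices assigned to \<open>x\<close> and \<open>y\<close>. A shortest path
  can be taken simple, so each distance changes by at most 1 between neighbouring weight
  functions; composing at most \<open>card Zs ^ 2\<close> such releases gives \<open>\<epsilon>\<close>-privacy. A union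
  bound over the Laplace tails bounds every noise term by \<open>O(card Zs ^ 2 / \<epsilon> * ln (card Zs / \<gamma>))\<close>
  with probability \<open>1 - \<gamma>\<close>, and moving each endpoint to its covering vertex along at most
  \<open>k\<close> edges changes the distance by at most \<open>2 k \<Lambda>\<close>.\<close>

fun edges_of :: "nat list \<Rightarrow> nat set list" where
  "edges_of (a # b # xs) = {a, b} # edges_of (b # xs)"
| "edges_of _ = []"

lemma length_edges_of: "length (edges_of xs) = length xs - 1"
  by (induction xs rule: edges_of.induct) auto

lemma nth_edges_of: "i < length xs - 1 \<Longrightarrow> edges_of xs ! i = {xs ! i, xs ! Suc i}"
proof (induction xs arbitrary: i rule: edges_of.induct)
  case (1 a b xs)
  then show ?case by (cases i) auto
qed auto

lemma path_weight_eq_sum_list: "path_weight w xs = sum_list (map w (edges_of xs))"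
  unfolding path_weight_def
  by (simp add: sum_list_sum_nth length_edges_of nth_edges_of atLeast0LessThan)

lemma is_path_iff_edges_of: "is_path E xs \<longleftrightarrow> xs \<noteq> [] \<and> set (edges_of xs) \<subseteq> E"
  unfolding is_path_def by (auto simp: set_conv_nth length_edges_of nth_edges_of)

lemma edges_of_append: "edges_of (xs @ y # ys) = edges_of (xs @ [y]) @ edges_of (y # ys)"
  by (induction xs rule: edges_of.induct) (auto simp: neq_Nil_conv)

lemma edges_of_rev: "edges_of (rev xs) = rev (edges_of xs)"
proof (induction xs rule: edges_of.induct)
  case (1 a b xs)
  have "edges_of (rev (a # b # xs)) = edges_of (rev (b # xs)) @ [{b, a}]"
    using edges_of_append[of "rev xs" b "[a]"] by simp
  then show ?case using 1 by (simp add: insert_commute)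
qed auto

lemma set_eq_insert_hd_Union_edges_of:
  "xs \<noteq> [] \<Longrightarrow> set xs = insert (hd xs) (\<Union> (set (edges_of xs)))"
  by (induction xs rule: edges_of.induct) auto

lemma distinct_edges_of: "distinct xs \<Longrightarrow> distinct (edges_of xs)"
proof (induction xs rule: edges_of.induct)
  case (1 a b xs)
  have "a \<notin> \<Union> (set (edges_of (b # xs)))"
    using 1(2) set_eq_insert_hd_Union_edges_of[of "b # xs"] by auto
  then show ?case using 1 by auto
qed auto

lemma edges_of_paths_between: "p \<in> paths_between E x y \<Longrightarrow> set (edges_of p) \<subseteq> E"
  by (simp add: paths_between_def is_path_iff_edges_of)

lemma rev_paths_between: "p \<in> paths_between E x y \<Longrightarrow> rev p \<in> paths_between E y x"
  by (auto simp: paths_between_def is_path_iff_edges_of edges_of_rev hd_rev last_rev)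

lemma path_weight_rev: "path_weight w (rev xs) = path_weight w xs"
  by (simp add: path_weight_eq_sum_list edges_of_rev rev_map[symmetric])

lemma path_weight_nonneg: "weight_fun E w \<Longrightarrow> set (edges_of xs) \<subseteq> E \<Longrightarrow> 0 \<le> path_weight w xs"
  unfolding path_weight_eq_sum_list weight_fun_def by (intro sum_list_nonneg) auto

lemma path_weight_le_length:
  assumes "\<forall>e\<in>E. w e \<le> \<Lambda>" "0 \<le> \<Lambda>" "set (edges_of p) \<subseteq> E" "length p - 1 \<le> k"
  shows "path_weight w p \<le> real k * \<Lambda>"
proof -
  have "path_weight w p \<le> sum_list (map (\<lambda>_. \<Lambda>) (edges_of p))"
    unfolding path_weight_eq_sum_list using assms by (intro sum_list_mono) auto
  also have "\<dots> = real (length p - 1) * \<Lambda>" by (simp add: sum_list_triv length_edges_of)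
  also have "\<dots> \<le> real k * \<Lambda>" using assms by (intro mult_right_mono) auto
  finally show ?thesis .
qed

lemma paths_between_join:
  assumes "p \<in> paths_between E x y" "q \<in> paths_between E y z"
  shows "butlast p @ q \<in> paths_between E x z"
    and "path_weight w (butlast p @ q) = path_weight w p + path_weight w q"
proof -
  obtain qs where q: "q = y # qs"
    using assms(2) unfolding paths_between_def is_path_def by (cases q) auto
  obtain ps where p: "p = ps @ [y]"
    using assms(1) unfolding paths_between_def is_path_def by (cases p rule: rev_exhaust) auto
  have hd: "hd (butlast p @ q) = x"
    using assms(1) q unfolding p paths_between_def by (cases ps) auto
  have "edges_of (butlast p @ q) = edges_of p @ edges_of q"
    using edges_of_append[of ps y qs] p q by simp
  then show "butlast p @ q \<in> paths_between E x z"
    and "path_weight w (butlast p @ q) = path_weight w p + path_weight w q"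
    using assms hd q unfolding paths_between_def is_path_iff_edges_of path_weight_eq_sum_list
    by auto
qed

text \<open>Removing the cycle between two occurrences of a repeated vertex does not increase the
  weight, so shortest paths may be taken simple.\<close>
lemma obtain_distinct_path:
  assumes "weight_fun E w" "p \<in> paths_between E x y"
  obtains q where "q \<in> paths_between E x y" "distinct q" "path_weight w q \<le> path_weight w p"
  using assms(2)
proof (induction "length p" arbitrary: p rule: less_induct)
  case less
  show ?case
  proof (cases "distinct p")
    case False
    then obtain A B C v where p: "p = A @ [v] @ B @ [v] @ C" using not_distinct_decomp by blast
    define q where "q = A @ v # C"
    have ep: "edges_of p = edges_of (A @ [v]) @ edges_of (v # B @ [v]) @ edges_of (v # C)"
      unfolding p using edges_of_append[of A v "B @ [v] @ C"] edges_of_append[of "v # B" v C] by simp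
    have eq: "edges_of q = edges_of (A @ [v]) @ edges_of (v # C)"
      unfolding q_def using edges_of_append[of A v C] by simp
    have E: "set (edges_of p) \<subseteq> E" using less.prems(2) by (rule edges_of_paths_between)
    have "0 \<le> path_weight w (v # B @ [v])"
      using E ep by (intro path_weight_nonneg[OF assms(1)]) auto
    then have "path_weight w q \<le> path_weight w p"
      unfolding path_weight_eq_sum_list ep eq by simp
    moreover have "q \<in> paths_between E x y"
    proof -
      have "hd q = hd p" unfolding q_def p by (cases A) auto
      moreover have "last q = last p" unfolding q_def p by (cases C) auto
      ultimately show ?thesis
        using less.prems(2) E ep eq unfolding paths_between_def is_path_iff_edges_of q_def
        by auto
    qed
    moreover have "length q < length p" unfolding p q_def by simp
    ultimately show ?thesis using less.hyps less.prems(1) by (meson order.trans)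
  qed (use less.prems in blast)
qed

lemma dist_w_le_path_weight:
  assumes "weight_fun E w" "p \<in> paths_between E x y"
  shows "dist_w E w x y \<le> path_weight w p"
  unfolding dist_w_def
proof (rule cInf_lower)
  show "path_weight w p \<in> path_weight w ` paths_between E x y" using assms(2) by simp
  show "bdd_below (path_weight w ` paths_between E x y)"
    using assms(1) by (intro bdd_belowI[of _ 0])
      (auto intro: path_weight_nonneg[OF _ edges_of_paths_between])
qed

lemma dist_w_greatest:
  assumes "connected_pair E x y" "\<And>p. p \<in> paths_between E x y \<Longrightarrow> c \<le> path_weight w p"
  shows "c \<le> dist_w E w x y"
  using assms unfolding dist_w_def connected_pair_def by (intro cInf_greatest) auto

lemma dist_w_nonneg: "weight_fun E w \<Longrightarrow> connected_pair E x y \<Longrightarrow> 0 \<le> dist_w E w x y"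
  by (rule dist_w_greatest) (auto intro: path_weight_nonneg[OF _ edges_of_paths_between])

lemma dist_w_refl:
  assumes "weight_fun E w"
  shows "dist_w E w a a = 0"
proof -
  have p: "[a] \<in> paths_between E a a" by (simp add: paths_between_def is_path_def)
  then have "dist_w E w a a \<le> 0"
    using dist_w_le_path_weight[OF assms] by (fastforce simp: path_weight_def)
  with p show ?thesis using dist_w_nonneg[OF assms] unfolding connected_pair_def by force
qed

lemma dist_w_sym: "dist_w E w x y = dist_w E w y x"
proof -
  have "paths_between E y x = rev ` paths_between E x y"
    by (auto simp: image_iff rev_paths_between) (metis rev_paths_between rev_rev_ident)
  then show ?thesis unfolding dist_w_def by (simp add: image_image path_weight_rev)
qed

lemma connected_pair_sym: "connected_pair E x y \<Longrightarrow> connected_pair E y x"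
  unfolding connected_pair_def using rev_paths_between by blast

lemma connected_pair_trans:
  "connected_pair E x y \<Longrightarrow> connected_pair E y z \<Longrightarrow> connected_pair E x z"
  unfolding connected_pair_def using paths_between_join(1) by blast

lemma dist_w_triangle:
  assumes "weight_fun E w" "connected_pair E x y" "connected_pair E y z"
  shows "dist_w E w x z \<le> dist_w E w x y + dist_w E w y z"
proof -
  have "dist_w E w x z - path_weight w q \<le> dist_w E w x y" if q: "q \<in> paths_between E y z" for q
  proof (rule dist_w_greatest[OF assms(2)])
    fix p assume "p \<in> paths_between E x y"
    then show "dist_w E w x z - path_weight w q \<le> path_weight w p"
      using dist_w_le_path_weight[OF assms(1)] paths_between_join[OF _ q] by fastforce
  qed
  then have "dist_w E w x z - dist_w E w x y \<le> dist_w E w y z"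
    using assms(3) by (intro dist_w_greatest) force+
  then show ?thesis by simp
qed

lemma path_weight_diff_le:
  assumes "distinct p" "set (edges_of p) \<subseteq> E" "finite E"
  shows "path_weight w p - path_weight w' p \<le> (\<Sum>e\<in>E. \<bar>w e - w' e\<bar>)"
proof -
  have "path_weight w p - path_weight w' p = (\<Sum>e\<in>set (edges_of p). w e - w' e)"
    unfolding path_weight_eq_sum_list using distinct_edges_of[OF assms(1)]
    by (simp add: sum_list_distinct_conv_sum_set sum_subtractf)
  also have "\<dots> \<le> (\<Sum>e\<in>set (edges_of p). \<bar>w e - w' e\<bar>)" by (intro sum_mono) auto
  also have "\<dots> \<le> (\<Sum>e\<in>E. \<bar>w e - w' e\<bar>)" using assms by (intro sum_mono2) auto
  finally show ?thesis .
qed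

text \<open>Only simple paths need to be considered, and these use every edge at most once.\<close>
lemma dist_w_le_add_sum_abs_diff:
  assumes "weight_fun E w" "weight_fun E w'" "finite E"
  shows "dist_w E w' x y \<le> dist_w E w x y + (\<Sum>e\<in>E. \<bar>w e - w' e\<bar>)"
proof (cases "connected_pair E x y")
  case True
  have "dist_w E w' x y - (\<Sum>e\<in>E. \<bar>w e - w' e\<bar>) \<le> path_weight w p"
    if p: "p \<in> paths_between E x y" for p
  proof -
    obtain q where q: "q \<in> paths_between E x y" "distinct q" "path_weight w q \<le> path_weight w p"
      using obtain_distinct_path[OF assms(1) p] by blast
    have "path_weight w' q - path_weight w q \<le> (\<Sum>e\<in>E. \<bar>w e - w' e\<bar>)"
      using path_weight_diff_le[OF q(2) edges_of_paths_between[OF q(1)] assms(3), of w' w]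
      by (simp add: abs_minus_commute)
    then show ?thesis using dist_w_le_path_weight[OF assms(2) q(1)] q(3) by linarith
  qed
  with True show ?thesis using dist_w_greatest by fastforce
next
  case False
  then show ?thesis unfolding connected_pair_def dist_w_def by (simp add: sum_nonneg)
qed

lemma dist_w_le_card_mult:
  assumes "graph V E" "weight_fun E w" "\<forall>e\<in>E. w e \<le> \<Lambda>" "0 \<le> \<Lambda>" "x \<in> V"
    and "connected_pair E x y"
  shows "dist_w E w x y \<le> real (card V) * \<Lambda>"
proof -
  obtain p where "p \<in> paths_between E x y" using assms(6) unfolding connected_pair_def by blast
  then obtain q where q: "q \<in> paths_between E x y" "distinct q"
    using obtain_distinct_path[OF assms(2)] by metis
  have "q \<noteq> []" "hd q = x" using q(1) unfolding paths_between_def is_path_def by auto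
  then have "set q \<subseteq> V"
    using assms(1,5) edges_of_paths_between[OF q(1)] set_eq_insert_hd_Union_edges_of[of q]
    unfolding graph_def by auto
  then have "length q - 1 \<le> card V"
    using assms(1) q(2) unfolding graph_def by (metis card_mono distinct_card le_diff_conv trans_le_add1)
  then have "path_weight w q \<le> real (card V) * \<Lambda>"
    using path_weight_le_length[OF assms(3,4) edges_of_paths_between[OF q(1)]] by blast
  then show ?thesis using dist_w_le_path_weight[OF assms(2) q(1)] by simp
qed

lemma dist_w_approx_by_nearby:
  assumes w: "weight_fun E w" and xy: "connected_pair E x y"
    and xa: "connected_pair E x a" "dist_w E w x a \<le> r"
    and yb: "connected_pair E y b" "dist_w E w y b \<le> s"
  shows "connected_pair E a b" and "\<bar>dist_w E w x y - dist_w E w a b\<bar> \<le> r + s"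
proof -
  have ax: "connected_pair E a x" and "connected_pair E b y" using xa yb connected_pair_sym by auto
  then have ay: "connected_pair E a y" and xb: "connected_pair E x b"
    using connected_pair_trans xy yb(1) by blast+
  show ab: "connected_pair E a b" using connected_pair_trans[OF ay yb(1)] .
  have "dist_w E w x y \<le> dist_w E w x a + dist_w E w a b + dist_w E w b y"
    using dist_w_triangle[OF w xa(1) ay] dist_w_triangle[OF w ab \<open>connected_pair E b y\<close>] by simp
  moreover have "dist_w E w a b \<le> dist_w E w a x + dist_w E w x y + dist_w E w y b"
    using dist_w_triangle[OF w ax xb] dist_w_triangle[OF w xy yb(1)] by simp
  ultimately show "\<bar>dist_w E w x y - dist_w E w a b\<bar> \<le> r + s"
    using xa(2) yb(2) dist_w_sym[of E w b y] dist_w_sym[of E w a x] by (auto simp: abs_le_iff)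
qed



lemma sum_exp_neg_nat_le_2:
  assumes "finite (S :: nat set)"
  shows "(\<Sum>m\<in>S. exp (- real m)) \<le> 2"
proof -
  have q: "exp (-1 :: real) < 1" "exp (-1 :: real) \<le> 1 / 2"
    using exp_ge_add_one_self[of "1::real"] by (auto simp: exp_minus field_simps)
  have "(\<Sum>m\<in>S. exp (- real m)) = (\<Sum>m\<in>S. exp (-1) ^ m)"
    by (simp add: exp_of_nat_mult[symmetric])
  also have "\<dots> \<le> (\<Sum>m. exp (-1) ^ m)"
    using q(1) assms by (intro sum_le_suminf) auto
  also have "\<dots> = 1 / (1 - exp (-1))" using q(1) by (simp add: suminf_geometric)
  also have "\<dots> \<le> 2" using q by (simp add: field_simps)
  finally show ?thesis .
qed

lemma sum_exp_upper_tail_le: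
  fixes S :: "int set" and u T :: real
  assumes "finite S"
  shows "(\<Sum>j\<in>{j\<in>S. T < of_int j - u}. exp (- (of_int j - u))) \<le> 2 * exp (- T)"
proof -
  define a where "a = \<lfloor>u + T\<rfloor> + 1"
  define S' where "S' = {j\<in>S. T < of_int j - u}"
  have a: "T < of_int a - u" unfolding a_def by linarith
  have a_le: "\<forall>j\<in>S'. a \<le> j"
  proof
    fix j assume "j \<in> S'"
    then have "\<lfloor>u + T\<rfloor> < j" unfolding S'_def by (simp add: floor_less_iff)
    then show "a \<le> j" unfolding a_def by simp
  qed
  have "inj_on (\<lambda>j. nat (j - a)) S'"
  proof (rule inj_onI)
    fix i j assume "i \<in> S'" "j \<in> S'" "nat (i - a) = nat (j - a)"
    then have "a \<le> i" "a \<le> j" "nat (i - a) = nat (j - a)" using a_le by blast+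
    then show "i = j" by linarith
  qed
  moreover have "finite S'" using assms unfolding S'_def by simp
  ultimately have sum_le: "(\<Sum>j\<in>S'. exp (- real (nat (j - a)))) \<le> 2"
    using sum_exp_neg_nat_le_2[of "(\<lambda>j. nat (j - a)) ` S'"] by (simp add: sum.reindex)
  have "exp (- (of_int j - u)) = exp (- (of_int a - u)) * exp (- real (nat (j - a)))"
    if "j \<in> S'" for j
  proof -
    have "real (nat (j - a)) = of_int j - of_int a" using a_le that by simp
    then show ?thesis by (simp add: exp_add[symmetric])
  qed
  then have "(\<Sum>j\<in>S'. exp (- (of_int j - u)))
      = exp (- (of_int a - u)) * (\<Sum>j\<in>S'. exp (- real (nat (j - a))))"
    by (simp add: sum_distrib_left)
  also have "\<dots> \<le> exp (- T) * 2"
    using a sum_le by (intro mult_mono) (auto intro: sum_nonneg)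
  finally show ?thesis unfolding S'_def by simp
qed

lemma sum_exp_tail_le:
  fixes S :: "int set" and u T :: real
  assumes "finite S" "0 \<le> T"
  shows "(\<Sum>j\<in>{j\<in>S. T < \<bar>of_int j - u\<bar>}. exp (- \<bar>of_int j - u\<bar>)) \<le> 4 * exp (- T)"
proof -
  let ?up = "{j\<in>S. T < of_int j - u}" and ?down = "{j\<in>S. T < u - of_int j}"
  have split: "{j\<in>S. T < \<bar>of_int j - u\<bar>} = ?up \<union> ?down" by auto
  have "(\<Sum>j\<in>?down. exp (- \<bar>of_int j - u\<bar>))
      = (\<Sum>j\<in>{j\<in>uminus ` S. T < of_int j - (- u)}. exp (- (of_int j - (- u))))"
  proof -
    have "{j\<in>uminus ` S. T < of_int j - (- u)} = uminus ` ?down" by force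
    then show ?thesis using assms(2) by (simp add: sum.reindex)
  qed
  also have "\<dots> \<le> 2 * exp (- T)" using assms(1) by (intro sum_exp_upper_tail_le) simp
  finally have "(\<Sum>j\<in>?down. exp (- \<bar>of_int j - u\<bar>)) \<le> 2 * exp (- T)" .
  moreover have "(\<Sum>j\<in>?up. exp (- \<bar>of_int j - u\<bar>)) \<le> 2 * exp (- T)"
    using sum_exp_upper_tail_le[OF assms(1), of u T] assms(2) by simp
  ultimately show ?thesis
    unfolding split using assms by (subst sum.union_disjoint) auto
qed

definition laplace_norm :: "int \<Rightarrow> real \<Rightarrow> real" where
  "laplace_norm K u = (\<Sum>j\<in>{0..K}. exp (- \<bar>of_int j - u\<bar>))"

definition laplace_density :: "int \<Rightarrow> real \<Rightarrow> int \<Rightarrow> real" where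
  "laplace_density K u j =
     (if j \<in> {0..K} then exp (- \<bar>of_int j - u\<bar>) / laplace_norm K u else 0)"

definition trunc_laplace :: "int \<Rightarrow> real \<Rightarrow> int pmf" where
  "trunc_laplace K u = embed_pmf (laplace_density K u)"

lemma laplace_norm_pos: "0 \<le> K \<Longrightarrow> 0 < laplace_norm K u"
  unfolding laplace_norm_def by (intro sum_pos) auto

lemma pmf_trunc_laplace:
  assumes "0 \<le> K"
  shows "pmf (trunc_laplace K u) j = laplace_density K u j"
  unfolding trunc_laplace_def
proof (rule pmf_embed_pmf)
  show nonneg: "0 \<le> laplace_density K u j" for j
    using laplace_norm_pos[OF assms, of u] by (simp add: laplace_density_def)
  have "(\<integral>\<^sup>+j. ennreal (laplace_density K u j) \<partial>count_space UNIV)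
      = (\<Sum>j\<in>{0..K}. ennreal (laplace_density K u j))"
    by (rule nn_integral_count_space') (auto simp: laplace_density_def)
  also have "\<dots> = ennreal (\<Sum>j\<in>{0..K}. laplace_density K u j)"
    using nonneg by (rule sum_ennreal)
  also have "(\<Sum>j\<in>{0..K}. laplace_density K u j) = 1"
    using laplace_norm_pos[OF assms, of u]
    by (simp add: laplace_density_def laplace_norm_def flip: sum_divide_distrib)
  finally show "(\<integral>\<^sup>+j. ennreal (laplace_density K u j) \<partial>count_space UNIV) = 1" by simp
qed

lemma exp_neg_abs_diff_le:
  fixes x u u' :: real
  shows "exp (- \<bar>x - u\<bar>) \<le> exp \<bar>u - u'\<bar> * exp (- \<bar>x - u'\<bar>)"
proof -
  have "- \<bar>x - u\<bar> \<le> \<bar>u - u'\<bar> + - \<bar>x - u'\<bar>" by linarith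
  then show ?thesis by (simp add: exp_add[symmetric])
qed

lemma pmf_trunc_laplace_le:
  assumes "0 \<le> K"
  shows "pmf (trunc_laplace K u) j \<le> exp (2 * \<bar>u - u'\<bar>) * pmf (trunc_laplace K u') j"
proof (cases "j \<in> {0..K}")
  case True
  have N: "0 < laplace_norm K u" "0 < laplace_norm K u'" using laplace_norm_pos[OF assms] by auto
  have "laplace_norm K u' \<le> (\<Sum>i\<in>{0..K}. exp \<bar>u - u'\<bar> * exp (- \<bar>of_int i - u\<bar>))"
    unfolding laplace_norm_def
    by (intro sum_mono) (metis exp_neg_abs_diff_le abs_minus_commute)
  then have "laplace_norm K u' \<le> exp \<bar>u - u'\<bar> * laplace_norm K u"
    by (simp add: laplace_norm_def sum_distrib_left)
  then have "1 / laplace_norm K u \<le> exp \<bar>u - u'\<bar> / laplace_norm K u'"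
    using N by (simp add: field_simps)
  then have "exp (- \<bar>of_int j - u\<bar>) * (1 / laplace_norm K u)
      \<le> (exp \<bar>u - u'\<bar> * exp (- \<bar>of_int j - u'\<bar>)) * (exp \<bar>u - u'\<bar> / laplace_norm K u')"
    using N(1) by (intro mult_mono exp_neg_abs_diff_le) auto
  also have "\<dots> = exp (2 * \<bar>u - u'\<bar>) * (exp (- \<bar>of_int j - u'\<bar>) / laplace_norm K u')"
    by (simp add: exp_add[symmetric])
  finally show ?thesis using True by (simp add: pmf_trunc_laplace[OF assms] laplace_density_def)
qed (auto simp: pmf_trunc_laplace[OF assms] laplace_density_def)

lemma laplace_norm_ge:
  assumes "0 \<le> u" "u \<le> of_int K"
  shows "exp (-1) \<le> laplace_norm K u"
proof -
  have "exp (-1) \<le> exp (- \<bar>of_int \<lfloor>u\<rfloor> - u\<bar>)" by simp linarith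
  also have "\<dots> \<le> laplace_norm K u"
    unfolding laplace_norm_def using assms by (intro member_le_sum) (auto simp: le_floor_iff floor_le_iff)
  finally show ?thesis .
qed

lemma prob_trunc_laplace_tail:
  fixes u T :: real
  assumes "0 \<le> u" "u \<le> of_int K" "0 \<le> T"
  shows "measure_pmf.prob (trunc_laplace K u) {j. T < \<bar>of_int j - u\<bar>} \<le> 12 * exp (- T)"
proof -
  have K: "0 \<le> K" using assms by linarith
  define S where "S = {j\<in>{0..K}. T < \<bar>of_int j - u\<bar>}"
  have "finite S" unfolding S_def by (rule finite_subset[of _ "{0..K}"]) auto
  have "measure_pmf.prob (trunc_laplace K u) {j. T < \<bar>of_int j - u\<bar>}
      = infsetsum (laplace_density K u) S"
    unfolding measure_pmf_conv_infsetsum pmf_trunc_laplace[OF K]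
    by (rule infsetsum_cong_neutral) (auto simp: S_def laplace_density_def)
  also have "\<dots> = (\<Sum>j\<in>S. exp (- \<bar>of_int j - u\<bar>)) / laplace_norm K u"
    using \<open>finite S\<close> unfolding S_def laplace_density_def by (simp add: sum_divide_distrib)
  also have "\<dots> \<le> (4 * exp (- T)) / exp (-1)"
    using sum_exp_tail_le[of "{0..K}" T u] laplace_norm_ge[OF assms(1,2)] assms(3)
    unfolding S_def by (intro frac_le) (auto intro: sum_nonneg)
  also have "\<dots> = 4 * exp 1 * exp (- T)" by (simp add: exp_minus field_simps)
  also have "\<dots> \<le> 12 * exp (- T)" using exp_le by simp
  finally show ?thesis .
qed

lemma measure_pmf_le_of_pmf_le:
  assumes "\<And>x. pmf p x \<le> c * pmf q x"
  shows "measure_pmf.prob p X \<le> c * measure_pmf.prob q X"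
  unfolding measure_pmf_conv_infsetsum
  using assms by (subst infsetsum_cmult_right[symmetric]) (auto intro: infsetsum_mono)

lemma pmf_Pi_pmf_le:
  assumes "finite I" "0 \<le> c" "\<And>i x. i \<in> I \<Longrightarrow> pmf (p i) x \<le> c * pmf (q i) x"
  shows "pmf (Pi_pmf I d p) f \<le> c ^ card I * pmf (Pi_pmf I d q) f"
proof (cases "\<forall>x. x \<notin> I \<longrightarrow> f x = d")
  case True
  have "(\<Prod>i\<in>I. pmf (p i) (f i)) \<le> (\<Prod>i\<in>I. c * pmf (q i) (f i))"
    using assms(3) by (intro prod_mono) auto
  then show ?thesis using True assms(1) by (simp add: pmf_Pi prod.distrib)
qed (auto simp: pmf_Pi[OF assms(1)])

lemma ln_mult_square_le:
  fixes z \<gamma> :: real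
  assumes "2 \<le> z" "0 < \<gamma>" "\<gamma> < 1"
  shows "ln (12 * z ^ 2 / \<gamma>) \<le> 6 * ln (z / \<gamma>)"
proof -
  have "(12 :: real) \<le> z ^ 4" using power_mono[OF assms(1), of 4] by simp
  then have "ln 12 \<le> ln (z ^ 4)" using assms(1) by (subst ln_le_cancel_iff) auto
  also have "\<dots> = 4 * ln z" using assms(1) by (simp add: ln_realpow)
  finally have "ln 12 \<le> 4 * ln z" .
  moreover have "ln \<gamma> < 0" using assms by simp
  moreover have "ln (12 * z ^ 2 / \<gamma>) = ln 12 + 2 * ln z - ln \<gamma>" "ln (z / \<gamma>) = ln z - ln \<gamma>"
    using assms by (simp_all add: ln_div ln_mult ln_realpow)
  ultimately show ?thesis by linarith
qed

locale covering_mechanism =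
  fixes V :: "nat set" and E :: "nat set set" and Zs :: "nat set" and k :: nat and \<epsilon> \<Lambda> :: real
  assumes graph: "graph V E" and covering: "k_covering V E k Zs"
    and eps_pos: "0 < \<epsilon>" and Lambda_pos: "0 < \<Lambda>"
begin

text \<open>A change of the weights by 1 moves each grid distance by at most \<open>1 / step\<close>, which
  changes each Laplace probability by a factor \<open>exp (2 / step)\<close>; over at most
  \<open>card Zs ^ 2\<close> pairs this is at most \<open>exp \<epsilon>\<close>.\<close>
definition step :: real where
  "step = 2 * (real (card Zs) ^ 2 + 1) / \<epsilon>"

definition grid_size :: int where
  "grid_size = \<lceil>real (card V) * \<Lambda> / step\<rceil>"

definition center_pairs :: "(nat \<times> nat) set" where
  "center_pairs = {(a, b). a \<in> Zs \<and> b \<in> Zs \<and> a \<noteq> b}"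

text \<open>Clamping to \<open>[0, grid_size * step]\<close> keeps the mean on the grid even for pairs in
  different components, where \<open>dist_w\<close> is the junk value \<open>Inf {}\<close>.\<close>
definition grid_dist :: "(nat set \<Rightarrow> real) \<Rightarrow> nat \<times> nat \<Rightarrow> real" where
  "grid_dist w i = max 0 (min (dist_w E w (fst i) (snd i)) (of_int grid_size * step)) / step"

definition noisy_grid_dists :: "(nat set \<Rightarrow> real) \<Rightarrow> (nat \<times> nat \<Rightarrow> int) pmf" where
  "noisy_grid_dists w = Pi_pmf center_pairs 0 (\<lambda>i. trunc_laplace grid_size (grid_dist w i))"

definition center :: "nat \<Rightarrow> nat" where
  "center x = (SOME z. z \<in> Zs \<and> (\<exists>p\<in>paths_between E x z. length p - 1 \<le> k))"

definition release :: "(nat \<times> nat \<Rightarrow> int) \<Rightarrow> nat \<times> nat \<Rightarrow> real" where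
  "release v = restrict
     (\<lambda>(x, y). if center x = center y then 0 else step * of_int (v (center x, center y))) (V \<times> V)"

definition mechanism :: "(nat set \<Rightarrow> real) \<Rightarrow> (nat \<times> nat \<Rightarrow> real) measure" where
  "mechanism w = distr (measure_pmf (noisy_grid_dists w)) (out_space V) release"

lemma step_pos: "0 < step"
  unfolding step_def using eps_pos by (simp add: add_nonneg_pos)

lemma two_div_step: "2 / step = \<epsilon> / (real (card Zs) ^ 2 + 1)"
  by (simp add: step_def del: distrib_left_numeral)

lemma grid_size_nonneg: "0 \<le> grid_size"
proof -
  have "0 \<le> real (card V) * \<Lambda> / step" using step_pos Lambda_pos by simp
  then show ?thesis unfolding grid_size_def by linarith
qed

lemma finite_V: "finite V" and finite_E: "finite E" and Zs_subset: "Zs \<subseteq> V"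
  using graph covering finite_subset[of E "Pow V"]
  unfolding graph_def k_covering_def by auto

lemma finite_center_pairs: "finite center_pairs"
  unfolding center_pairs_def using finite_subset[OF Zs_subset finite_V]
  by (auto intro: finite_subset[of _ "Zs \<times> Zs"])

lemma card_center_pairs_le: "card center_pairs \<le> card Zs ^ 2"
proof -
  have "card center_pairs \<le> card (Zs \<times> Zs)"
    unfolding center_pairs_def using finite_subset[OF Zs_subset finite_V] by (intro card_mono) auto
  then show ?thesis by (simp add: card_cartesian_product power2_eq_square)
qed

lemma two_le_card_Zs:
  assumes "i \<in> center_pairs"
  shows "2 \<le> card Zs"
proof -
  obtain a b where "a \<in> Zs" "b \<in> Zs" "a \<noteq> b" using assms unfolding center_pairs_def by auto
  then have "card {a, b} \<le> card Zs" using finite_subset[OF Zs_subset finite_V] by (intro card_mono) auto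
  with \<open>a \<noteq> b\<close> show ?thesis by simp
qed

lemma card_V_mult_le_grid: "real (card V) * \<Lambda> \<le> of_int grid_size * step"
  unfolding grid_size_def using step_pos by (simp add: pos_divide_le_eq[symmetric])

lemma grid_dist_bounds: "0 \<le> grid_dist w i" "grid_dist w i \<le> of_int grid_size"
  unfolding grid_dist_def using step_pos grid_size_nonneg by (auto simp: divide_le_eq)

lemma center_spec:
  assumes "x \<in> V"
  shows "center x \<in> Zs \<and> (\<exists>p\<in>paths_between E x (center x). length p - 1 \<le> k)"
proof -
  have "\<exists>z. z \<in> Zs \<and> (\<exists>p\<in>paths_between E x z. length p - 1 \<le> k)"
    using covering assms unfolding k_covering_def by blast
  then show ?thesis unfolding center_def by (rule someI_ex)
qed

lemma dist_center_le:
  assumes "weight_fun E w" "\<forall>e\<in>E. w e \<le> \<Lambda>" "x \<in> V"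
  shows "connected_pair E x (center x)" "dist_w E w x (center x) \<le> real k * \<Lambda>"
proof -
  obtain p where p: "p \<in> paths_between E x (center x)" "length p - 1 \<le> k"
    using center_spec[OF assms(3)] by blast
  then show "connected_pair E x (center x)" unfolding connected_pair_def by blast
  show "dist_w E w x (center x) \<le> real k * \<Lambda>"
    using dist_w_le_path_weight[OF assms(1) p(1)] Lambda_pos
      path_weight_le_length[OF assms(2) _ edges_of_paths_between[OF p(1)] p(2)] by simp
qed

lemma release_measurable: "release \<in> measurable (measure_pmf p) (out_space V)"
  by (auto simp: release_def out_space_def space_PiM)

lemma release_in_space: "release v \<in> space (out_space V)"
  by (simp add: release_def out_space_def space_PiM)

lemma measure_mechanism:
  "S \<in> sets (out_space V) \<Longrightarrow> measure (mechanism w) S = measure_pmf.prob (noisy_grid_dists w) (release -` S)"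
  unfolding mechanism_def using release_measurable by (simp add: measure_distr)

lemma randomized_alg_mechanism: "randomized_alg V mechanism"
  unfolding randomized_alg_def mechanism_def
  using measure_pmf.prob_space_distr[OF release_measurable] by simp

lemma grid_dist_diff_le:
  assumes "weight_fun E w" "weight_fun E w'" "neighboring E w w'"
  shows "\<bar>grid_dist w i - grid_dist w' i\<bar> \<le> 1 / step"
proof -
  let ?d = "\<lambda>w. dist_w E w (fst i) (snd i)" and ?M = "of_int grid_size * step"
  have "(\<Sum>e\<in>E. \<bar>w e - w' e\<bar>) \<le> 1" "(\<Sum>e\<in>E. \<bar>w' e - w e\<bar>) \<le> 1"
    using assms(3) unfolding neighboring_def by (simp_all add: abs_minus_commute)
  then have "\<bar>?d w - ?d w'\<bar> \<le> 1"
    using dist_w_le_add_sum_abs_diff[OF assms(1,2) finite_E, of "fst i" "snd i"]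
      dist_w_le_add_sum_abs_diff[OF assms(2,1) finite_E, of "fst i" "snd i"]
    by (auto simp: abs_le_iff)
  then have "\<bar>max 0 (min (?d w) ?M) - max 0 (min (?d w') ?M)\<bar> \<le> 1" by linarith
  then show ?thesis unfolding grid_dist_def using step_pos
    by (simp add: diff_divide_distrib[symmetric] abs_divide divide_right_mono)
qed

lemma pmf_noisy_grid_dists_le:
  assumes "weight_fun E w" "weight_fun E w'" "neighboring E w w'"
  shows "pmf (noisy_grid_dists w) v \<le> exp \<epsilon> * pmf (noisy_grid_dists w') v"
proof -
  have "pmf (noisy_grid_dists w) v \<le> exp (2 / step) ^ card center_pairs * pmf (noisy_grid_dists w') v"
    unfolding noisy_grid_dists_def
  proof (rule pmf_Pi_pmf_le[OF finite_center_pairs])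
    fix i j
    have "pmf (trunc_laplace grid_size (grid_dist w i)) j
        \<le> exp (2 * \<bar>grid_dist w i - grid_dist w' i\<bar>) * pmf (trunc_laplace grid_size (grid_dist w' i)) j"
      by (rule pmf_trunc_laplace_le[OF grid_size_nonneg])
    also have "\<dots> \<le> exp (2 / step) * pmf (trunc_laplace grid_size (grid_dist w' i)) j"
      using grid_dist_diff_le[OF assms, of i] by (intro mult_right_mono) auto
    finally show "pmf (trunc_laplace grid_size (grid_dist w i)) j
        \<le> exp (2 / step) * pmf (trunc_laplace grid_size (grid_dist w' i)) j" .
  qed simp
  also have "exp (2 / step) ^ card center_pairs \<le> exp \<epsilon>"
  proof -
    have "real (card center_pairs) \<le> real (card Zs) ^ 2 + 1"
      using card_center_pairs_le by (metis of_nat_le_iff of_nat_power add_increasing2 zero_le_one)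
    then have "real (card center_pairs) * (\<epsilon> / (real (card Zs) ^ 2 + 1))
        \<le> (real (card Zs) ^ 2 + 1) * (\<epsilon> / (real (card Zs) ^ 2 + 1))"
      using eps_pos by (intro mult_right_mono) auto
    also have "\<dots> = \<epsilon>" using add_nonneg_pos[of "real (card Zs) ^ 2" 1] by simp
    finally have "real (card center_pairs) * (\<epsilon> / (real (card Zs) ^ 2 + 1)) \<le> \<epsilon>" .
    then have "real (card center_pairs) * (2 / step) \<le> \<epsilon>"
      unfolding two_div_step .
    then show ?thesis by (simp add: exp_of_nat_mult[symmetric])
  qed
  finally show ?thesis by (simp add: mult_right_mono)
qed

lemma diff_private_mechanism: "diff_private E \<epsilon> mechanism"
  unfolding diff_private_def
proof (intro allI impI ballI)
  fix w w' S
  assume ww: "weight_fun E w \<and> weight_fun E w' \<and> neighboring E w w'" and "S \<in> sets (mechanism w)"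
  then have S: "S \<in> sets (out_space V)" by (simp add: mechanism_def)
  show "measure (mechanism w) S \<le> exp \<epsilon> * measure (mechanism w') S"
    unfolding measure_mechanism[OF S] using ww
    by (intro measure_pmf_le_of_pmf_le pmf_noisy_grid_dists_le) auto
qed

lemma release_error:
  assumes w: "weight_fun E w" "\<forall>e\<in>E. w e \<le> \<Lambda>"
    and xy: "x \<in> V" "y \<in> V" "connected_pair E x y"
    and v: "\<forall>i\<in>center_pairs. \<bar>of_int (v i) - grid_dist w i\<bar> \<le> T" and "0 \<le> T"
  shows "\<bar>release v (x, y) - dist_w E w x y\<bar> \<le> 2 * (real k * \<Lambda>) + step * T"
proof -
  let ?a = "center x" and ?b = "center y"
  have ab: "connected_pair E ?a ?b"
    and near: "\<bar>dist_w E w x y - dist_w E w ?a ?b\<bar> \<le> real k * \<Lambda> + real k * \<Lambda>"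
    using dist_w_approx_by_nearby[OF w(1) xy(3)] dist_center_le[OF w] xy(1,2) by blast+
  have "\<bar>release v (x, y) - dist_w E w ?a ?b\<bar> \<le> step * T"
  proof (cases "?a = ?b")
    case True
    then show ?thesis using xy \<open>0 \<le> T\<close> step_pos dist_w_refl[OF w(1)] by (simp add: release_def)
  next
    case False
    then have i: "(?a, ?b) \<in> center_pairs" using center_spec xy(1,2) by (simp add: center_pairs_def)
    have "?a \<in> V" using center_spec[OF xy(1)] Zs_subset by blast
    then have "dist_w E w ?a ?b \<le> of_int grid_size * step"
      using dist_w_le_card_mult[OF graph w less_imp_le[OF Lambda_pos] _ ab] card_V_mult_le_grid
      by linarith
    then have "dist_w E w ?a ?b = step * grid_dist w (?a, ?b)"
      using dist_w_nonneg[OF w(1) ab] step_pos by (simp add: grid_dist_def)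
    then have "\<bar>release v (x, y) - dist_w E w ?a ?b\<bar> = step * \<bar>of_int (v (?a, ?b)) - grid_dist w (?a, ?b)\<bar>"
      using False xy step_pos by (simp add: release_def abs_mult flip: right_diff_distrib)
    then show ?thesis using v i step_pos by (simp add: mult_left_mono)
  qed
  then show ?thesis using near by linarith
qed

lemma prob_noisy_grid_dists_far:
  assumes "0 \<le> T"
  shows "measure_pmf.prob (noisy_grid_dists w) {v. \<exists>i\<in>center_pairs. T < \<bar>of_int (v i) - grid_dist w i\<bar>}
    \<le> real (card center_pairs) * (12 * exp (- T))"
proof -
  have "measure_pmf.prob (noisy_grid_dists w) {v. \<exists>i\<in>center_pairs. T < \<bar>of_int (v i) - grid_dist w i\<bar>}
      \<le> (\<Sum>i\<in>center_pairs. measure_pmf.prob (noisy_grid_dists w) {v. T < \<bar>of_int (v i) - grid_dist w i\<bar>})"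
    using measure_pmf.finite_measure_subadditive_finite[OF finite_center_pairs, of "\<lambda>i. {v. T < \<bar>of_int (v i) - grid_dist w i\<bar>}"]
    by (simp add: Collect_bex_eq)
  also have "\<dots> \<le> (\<Sum>i\<in>center_pairs. 12 * exp (- T))"
  proof (rule sum_mono)
    fix i assume i: "i \<in> center_pairs"
    have "map_pmf (\<lambda>v. v i) (noisy_grid_dists w) = trunc_laplace grid_size (grid_dist w i)"
      unfolding noisy_grid_dists_def using i by (simp add: Pi_pmf_component[OF finite_center_pairs])
    moreover have "measure_pmf.prob (noisy_grid_dists w) {v. T < \<bar>of_int (v i) - grid_dist w i\<bar>}
        = measure_pmf.prob (map_pmf (\<lambda>v. v i) (noisy_grid_dists w)) {j. T < \<bar>of_int j - grid_dist w i\<bar>}"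
      by simp
    ultimately have "measure_pmf.prob (noisy_grid_dists w) {v. T < \<bar>of_int (v i) - grid_dist w i\<bar>}
        = measure_pmf.prob (trunc_laplace grid_size (grid_dist w i)) {j. T < \<bar>of_int j - grid_dist w i\<bar>}"
      by simp
    then show "measure_pmf.prob (noisy_grid_dists w) {v. T < \<bar>of_int (v i) - grid_dist w i\<bar>} \<le> 12 * exp (- T)"
      using prob_trunc_laplace_tail[OF grid_dist_bounds assms] by simp
  qed
  finally show ?thesis by simp
qed

text \<open>With \<open>T = ln (12 * card Zs ^ 2 / \<gamma>)\<close> the union bound over at most \<open>card Zs ^ 2\<close>
  noisy distances gives failure probability \<open>\<gamma>\<close>.\<close>
lemma obtain_error_threshold:
  assumes "0 < \<gamma>" "\<gamma> < 1"
  obtains T where "0 \<le> T"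
    and "2 * (real k * \<Lambda>) + step * T
      \<le> 24 * (real k * \<Lambda> + real (card Zs) ^ 2 / \<epsilon> * ln (real (card Zs) / \<gamma>))"
    and "measure_pmf.prob (noisy_grid_dists w)
      {v. \<exists>i\<in>center_pairs. T < \<bar>of_int (v i) - grid_dist w i\<bar>} \<le> \<gamma>"
proof (cases "center_pairs = {}")
  case True
  have "0 \<le> real (card Zs) ^ 2 / \<epsilon> * ln (real (card Zs) / \<gamma>)"
  proof (cases "card Zs = 0")
    case False
    then have "1 \<le> real (card Zs) / \<gamma>" using assms by (simp add: field_simps)
    then show ?thesis using eps_pos by simp
  qed simp
  then show ?thesis using that[of 0] True Lambda_pos assms by simp
next
  case False
  let ?Z = "real (card Zs)"
  have Z: "2 \<le> ?Z" using False two_le_card_Zs by fastforce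
  define T where "T = ln (12 * ?Z ^ 2 / \<gamma>)"
  have "4 \<le> ?Z ^ 2" using power_mono[OF Z, of 2] by simp
  then have "1 \<le> 12 * ?Z ^ 2 / \<gamma>" using assms by (simp add: field_simps)
  then have T_nonneg: "0 \<le> T" unfolding T_def by simp
  have "step \<le> 4 * ?Z ^ 2 / \<epsilon>"
    unfolding step_def using eps_pos power_mono[OF Z, of 2] by (simp add: divide_right_mono)
  then have "step * T \<le> 4 * ?Z ^ 2 / \<epsilon> * (6 * ln (?Z / \<gamma>))"
    using T_nonneg ln_mult_square_le[OF Z assms] eps_pos unfolding T_def
    by (intro mult_mono) auto
  moreover have "4 * ?Z ^ 2 / \<epsilon> * (6 * ln (?Z / \<gamma>)) = 24 * (?Z ^ 2 / \<epsilon> * ln (?Z / \<gamma>))"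
    by simp
  moreover have "0 \<le> real k * \<Lambda>" using Lambda_pos by simp
  ultimately have bound: "2 * (real k * \<Lambda>) + step * T
      \<le> 24 * (real k * \<Lambda> + ?Z ^ 2 / \<epsilon> * ln (?Z / \<gamma>))"
    unfolding distrib_left by linarith
  have exp_T: "12 * exp (- T) = \<gamma> / ?Z ^ 2" unfolding T_def using Z assms by (simp add: exp_minus)
  have "real (card center_pairs) \<le> ?Z ^ 2"
    using card_center_pairs_le by (metis of_nat_le_iff of_nat_power)
  then have "real (card center_pairs) * (12 * exp (- T)) \<le> ?Z ^ 2 * (\<gamma> / ?Z ^ 2)"
    unfolding exp_T using assms by (intro mult_right_mono) auto
  also have "\<dots> = \<gamma>" using Z by simp
  finally show ?thesis
    using that[OF T_nonneg bound] prob_noisy_grid_dists_far[OF T_nonneg, of w] by simp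
qed

lemma mechanism_accurate:
  assumes w: "\<forall>e\<in>E. 0 \<le> w e \<and> w e \<le> \<Lambda>" and \<gamma>: "0 < \<gamma>" "\<gamma> < 1"
  shows "1 - \<gamma> \<le> measure (mechanism w) {f \<in> space (out_space V). \<forall>x\<in>V. \<forall>y\<in>V.
    connected_pair E x y \<longrightarrow> \<bar>f (x, y) - dist_w E w x y\<bar>
      \<le> 24 * (real k * \<Lambda> + real (card Zs) ^ 2 / \<epsilon> * ln (real (card Zs) / \<gamma>))}"
    (is "_ \<le> measure _ ?G")
proof -
  have wf: "weight_fun E w" and wb: "\<forall>e\<in>E. w e \<le> \<Lambda>"
    using w unfolding weight_fun_def by auto
  obtain T where T: "0 \<le> T"
    "2 * (real k * \<Lambda>) + step * T
      \<le> 24 * (real k * \<Lambda> + real (card Zs) ^ 2 / \<epsilon> * ln (real (card Zs) / \<gamma>))"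
    "measure_pmf.prob (noisy_grid_dists w) {v. \<exists>i\<in>center_pairs. T < \<bar>of_int (v i) - grid_dist w i\<bar>} \<le> \<gamma>"
    using obtain_error_threshold[OF \<gamma>] by blast
  let ?Bad = "{v. \<exists>i\<in>center_pairs. T < \<bar>of_int (v i) - grid_dist w i\<bar>}"
  have "release v \<in> ?G" if "v \<in> - ?Bad" for v
  proof -
    have v: "\<forall>i\<in>center_pairs. \<bar>of_int (v i) - grid_dist w i\<bar> \<le> T" using that by (auto simp: not_less)
    have "\<bar>release v (x, y) - dist_w E w x y\<bar>
        \<le> 24 * (real k * \<Lambda> + real (card Zs) ^ 2 / \<epsilon> * ln (real (card Zs) / \<gamma>))"
      if "x \<in> V" "y \<in> V" "connected_pair E x y" for x y
      using release_error[OF wf wb that v T(1)] T(2) by linarith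
    then show ?thesis using release_in_space by simp
  qed
  then have "- ?Bad \<subseteq> release -` ?G" by blast
  then have "measure_pmf.prob (noisy_grid_dists w) (- ?Bad) \<le> measure (mechanism w) ?G"
    using measure_mechanism[of ?G] by (simp add: measure_pmf.finite_measure_mono out_space_def)
  moreover have "measure_pmf.prob (noisy_grid_dists w) (- ?Bad) \<ge> 1 - \<gamma>"
    using T(3) measure_pmf.prob_compl[of ?Bad] by (simp add: Compl_eq_Diff_UNIV)
  ultimately show ?thesis by linarith
qed

end

theorem theorem4p7:
  shows "\<exists>C>0. \<forall>V E Zs (\<epsilon>::real) (\<Lambda>::real) (k::nat) (\<gamma>::real).
     graph V E \<and> \<epsilon> > 0 \<and> \<Lambda> > 0 \<and> k > 0 \<and> 0 < \<gamma> \<and> \<gamma> < 1 \<and> k_covering V E k Zs \<longrightarrow>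
     (\<exists>A. randomized_alg V A \<and> diff_private E \<epsilon> A \<and>
        (\<forall>w. (\<forall>e\<in>E. 0 \<le> w e \<and> w e \<le> \<Lambda>) \<longrightarrow>
           measure (A w) {f \<in> space (out_space V). \<forall>x\<in>V. \<forall>y\<in>V. connected_pair E x y \<longrightarrow>
              \<bar>f (x, y) - dist_w E w x y\<bar>
                \<le> C * (real k * \<Lambda> + real (card Zs) ^ 2 / \<epsilon> * ln (real (card Zs) / \<gamma>))}
           \<ge> 1 - \<gamma>))"
proof (intro exI[of _ 24] conjI allI impI)
  fix V E Zs and \<epsilon> \<Lambda> \<gamma> :: real and k :: nat
  assume h: "graph V E \<and> \<epsilon> > 0 \<and> \<Lambda> > 0 \<and> k > 0 \<and> 0 < \<gamma> \<and> \<gamma> < 1 \<and> k_covering V E k Zs"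
  then interpret covering_mechanism V E Zs k \<epsilon> \<Lambda> by unfold_locales auto
  show "\<exists>A. randomized_alg V A \<and> diff_private E \<epsilon> A \<and>
        (\<forall>w. (\<forall>e\<in>E. 0 \<le> w e \<and> w e \<le> \<Lambda>) \<longrightarrow>
           measure (A w) {f \<in> space (out_space V). \<forall>x\<in>V. \<forall>y\<in>V. connected_pair E x y \<longrightarrow>
              \<bar>f (x, y) - dist_w E w x y\<bar>
                \<le> 24 * (real k * \<Lambda> + real (card Zs) ^ 2 / \<epsilon> * ln (real (card Zs) / \<gamma>))}
           \<ge> 1 - \<gamma>)"
    using h by (intro exI[of _ mechanism] conjI randomized_alg_mechanism diff_private_mechanism
      allI impI mechanism_accurate) auto
qed simp

end
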